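(* Let $I$ be an increasing conditional indicator w.r.t. $\mathcal{H}$, and let $\rho_I$ and $\operatorname{Dom}\rho_I$ be as defined in the context. Then: (1) $\rho_I$ is an $\mathcal{H}$-conditional risk measure on $\operatorname{Dom}\rho_I$; (2) if $\mathbb{D}_I^+$ is $\mathcal{H}$-convex (for example if $I$ is conditionally convex), then $\rho_I$ is conditionally convex; (3) if $I$ is $\mathcal{H}$-positively homogeneous, then $\rho_I$ is conditionally positively homogeneous; (4) if $I$ is super-additive, then $\rho_I$ is sub-additive.
   Context: Let $(\Omega,\mathcal{F},\mathbb{P})$ be a probability space with $\mathcal{F}$ complete, and $\mathcal{H}\subseteq\mathcal{F}$ a complete sub-$\sigma$-algebra. $\overline{\mathbb{R}}=\mathbb{R}\cup\{\pm\infty\}$ with conventions $r\pm\infty=\pm\infty$, $\infty-\infty=0$, $\infty+\infty=\infty$, $0\times(\pm\infty)=0$; $\mathbb{L}^0(G,\mathcal{G})$ is the set of $\mathcal{G}$-measurable random variables a.s. valued in $G$. $\operatorname{ess\,sup}_{\mathcal{H}}\Gamma$ is the smallest $\mathcal{H}$-measurable random variable dominating all elements of a family $\Gamma$ a.s., $\operatorname{ess\,inf}_{\mathcal{H}}\Gamma=-\operatorname{ess\,sup}_{\mathcal{H}}(-\Gamma)$; $\operatorname{ess\,inf}\Gamma$ denotes the essential infimum (w.r.t. $\mathcal{F}$), with $\operatorname{ess\,inf}\emptyset=+\infty$. A conditional indicator w.r.t. $\mathcal{H}$ is a map $I:\mathbb{D}_I\to\mathbb{L}^0(\overline{\mathbb{R}},\mathcal{H})$,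 $0\in\mathbb{D}_I\subseteq\mathbb{L}^0(\overline{\mathbb{R}},\mathcal{F})$, with $I(X)\in[\operatorname{ess\,inf}_{\mathcal{H}}(X),\operatorname{ess\,sup}_{\mathcal{H}}(X)]$ a.s. and $\mathbb{D}_I+\mathbb{L}^0(\overline{\mathbb{R}},\mathcal{H})\subseteq\mathbb{D}_I$. Increasing: $X\le Y\Rightarrow I(X)\le I(Y)$. Set $\mathbb{D}_I^+=\{X\in\mathbb{D}_I:I(X)\ge0\}$, $\mathcal{M}_I(X)=(\mathbb{D}_I^+-X)\cap\mathbb{L}^0(\mathbb{R},\mathcal{H})$, $\rho_I(X)=\operatorname{ess\,inf}\mathcal{M}_I(X)$ for $X\in\mathbb{L}^0(\mathbb{R},\mathcal{F})$, and $\operatorname{Dom}\rho_I=\{X\in\mathbb{L}^0(\mathbb{R},\mathcal{F}):\mathcal{M}_I(X)\neq\emptyset\}$. A set $E$ is $\mathcal{H}$-convex if $\alpha X_1+(1-\alpha)X_2\in E$ for $X_1,X_2\in E$, $\alpha\in\mathbb{L}^0([0,1],\mathcal{H})$. $I$ is conditionally convex if $\mathbb{D}_I$ is $\mathcal{H}$-convex and $I(\alpha X+(1-\alpha)Y)\le\alpha I(X)+(1-\alpha)I(Y)$ for such $\alpha$; $I$ is $\mathcal{H}$-positively homogeneous if $\alpha\mathbb{D}_I\subseteq\mathbb{D}_I$ and $I(\alpha X)=\alpha I(X)$ for all $\alpha\in\mathbb{L}^0(\mathbb{R}_+,\mathcal{H})$; super-additive: $I(X+Y)\ge I(X)+I(Y)$.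 An $\mathcal{H}$-conditional risk measure on a set $\mathbb{D}\subseteq\mathbb{L}^0(\mathbb{R},\mathcal{F})$ with $0\in\mathbb{D}$, $\mathbb{D}+\mathbb{L}^0(\mathbb{R},\mathcal{H})\subseteq\mathbb{D}$, is a map $\rho:\mathbb{D}\to\mathbb{L}^0(\overline{\mathbb{R}},\mathcal{H})$ with $\rho(0)=0$, $\rho(X_1)\le\rho(X_2)$ whenever $X_1\ge X_2$, and $\rho(X+\alpha)=\rho(X)-\alpha$ for $\alpha\in\mathbb{L}^0(\mathbb{R},\mathcal{H})$. It is conditionally convex if its domain is $\mathcal{H}$-convex and $\rho(\alpha X_1+(1-\alpha)X_2)\le\alpha\rho(X_1)+(1-\alpha)\rho(X_2)$ for $\alpha\in\mathbb{L}^0([0,1],\mathcal{H})$; conditionally positively homogeneous if its domain is stable under multiplication by $\mathbb{L}^0(\mathbb{R}_+,\mathcal{H})$ and $\rho(\alpha X)=\alpha\rho(X)$ for such $\alpha$; sub-additive if $\rho(X+Y)\le\rho(X)+\rho(Y)$.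
   Formalization: Part (2) omits the case of conditionally convex I, assuming only that $\mathbb{D}_I^+$ is $\mathcal{H}$-convex; super-additivity of I and sub-additivity of $\rho_I$ include closure of $\mathbb{D}_I$, respectively $\operatorname{Dom}\rho_I$, under addition. Apart from conventions, each condition added here is assumed in the paper as well or is needed for the statement above to hold. *)

theory Defs
  imports "HOL-Probability.Probability"
begin

text \<open>Isabelle's ereal addition has infinity + (- infinity) = infinity; the paper uses
  infinity - infinity = 0. All other cases agree (r +- infinity = +- infinity,
  infinity + infinity = infinity, 0 * (+- infinity) = 0 as for Isabelle's ereal times).\<close>

definition eplus :: "ereal \<Rightarrow> ereal \<Rightarrow> ereal" where
  "eplus a b = (if (a = \<infinity> \<and> b = -\<infinity>) \<or> (a = -\<infinity> \<and> b = \<infinity>) then 0 else a + b)"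

definition eminus :: "ereal \<Rightarrow> ereal \<Rightarrow> ereal" where
  "eminus a b = eplus a (- b)"

definition rv_add :: "('a \<Rightarrow> ereal) \<Rightarrow> ('a \<Rightarrow> ereal) \<Rightarrow> 'a \<Rightarrow> ereal" where
  "rv_add X Y = (\<lambda>w. eplus (X w) (Y w))"

definition rv_sub :: "('a \<Rightarrow> ereal) \<Rightarrow> ('a \<Rightarrow> ereal) \<Rightarrow> 'a \<Rightarrow> ereal" where
  "rv_sub X Y = (\<lambda>w. eminus (X w) (Y w))"

definition rv_mul :: "('a \<Rightarrow> ereal) \<Rightarrow> ('a \<Rightarrow> ereal) \<Rightarrow> 'a \<Rightarrow> ereal" where
  "rv_mul A X = (\<lambda>w. A w * X w)"

definition rv_comb :: "('a \<Rightarrow> ereal) \<Rightarrow> ('a \<Rightarrow> ereal) \<Rightarrow> ('a \<Rightarrow> ereal) \<Rightarrow> 'a \<Rightarrow> ereal" where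
  "rv_comb A X Y = rv_add (rv_mul A X) (rv_mul (\<lambda>w. 1 - A w) Y)"

definition ereal_reals :: "ereal set" where "ereal_reals = UNIV - {\<infinity>, -\<infinity>}"
definition ereal_unit :: "ereal set" where "ereal_unit = {0..1}"
definition ereal_nonneg_reals :: "ereal set" where "ereal_nonneg_reals = {0..<\<infinity>}"

definition L0 :: "'a measure \<Rightarrow> 'a measure \<Rightarrow> ereal set \<Rightarrow> ('a \<Rightarrow> ereal) set" where
  "L0 M N G = {X. X \<in> borel_measurable N \<and> (AE w in M. X w \<in> G)}"

definition ae_le :: "'a measure \<Rightarrow> ('a \<Rightarrow> ereal) \<Rightarrow> ('a \<Rightarrow> ereal) \<Rightarrow> bool" where
  "ae_le M X Y \<longleftrightarrow> (AE w in M. X w \<le> Y w)"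

definition ae_eq :: "'a measure \<Rightarrow> ('a \<Rightarrow> ereal) \<Rightarrow> ('a \<Rightarrow> ereal) \<Rightarrow> bool" where
  "ae_eq M X Y \<longleftrightarrow> (AE w in M. X w = Y w)"

text \<open>A set of random variables is a set of a.s.-equivalence classes.\<close>
definition ae_closed :: "'a measure \<Rightarrow> ('a \<Rightarrow> ereal) set \<Rightarrow> bool" where
  "ae_closed M D \<longleftrightarrow> (\<forall>X\<in>D. \<forall>Y. Y \<in> borel_measurable M \<longrightarrow> ae_eq M X Y \<longrightarrow> Y \<in> D)"

definition is_ess_sup :: "'a measure \<Rightarrow> 'a measure \<Rightarrow> ('a \<Rightarrow> ereal) set \<Rightarrow> ('a \<Rightarrow> ereal) \<Rightarrow> bool" where
  "is_ess_sup M N G Y \<longleftrightarrow> Y \<in> borel_measurable N \<and> (\<forall>X\<in>G. ae_le M X Y) \<and>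
     (\<forall>Z\<in>borel_measurable N. (\<forall>X\<in>G. ae_le M X Z) \<longrightarrow> ae_le M Y Z)"

definition ess_sup :: "'a measure \<Rightarrow> 'a measure \<Rightarrow> ('a \<Rightarrow> ereal) set \<Rightarrow> 'a \<Rightarrow> ereal" where
  "ess_sup M N G = (SOME Y. is_ess_sup M N G Y)"

definition ess_inf :: "'a measure \<Rightarrow> 'a measure \<Rightarrow> ('a \<Rightarrow> ereal) set \<Rightarrow> 'a \<Rightarrow> ereal" where
  "ess_inf M N G = (\<lambda>w. - ess_sup M N ((\<lambda>X w. - X w) ` G) w)"

definition H_convex :: "'a measure \<Rightarrow> 'a measure \<Rightarrow> ('a \<Rightarrow> ereal) set \<Rightarrow> bool" where
  "H_convex M H E \<longleftrightarrow> (\<forall>X1\<in>E. \<forall>X2\<in>E. \<forall>A\<in>L0 M H ereal_unit. rv_comb A X1 X2 \<in> E)"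

definition cond_indicator ::
  "'a measure \<Rightarrow> 'a measure \<Rightarrow> ('a \<Rightarrow> ereal) set \<Rightarrow> (('a \<Rightarrow> ereal) \<Rightarrow> 'a \<Rightarrow> ereal) \<Rightarrow> bool" where
  "cond_indicator M H D I \<longleftrightarrow>
     D \<subseteq> L0 M M UNIV \<and> (\<lambda>_. 0) \<in> D \<and> ae_closed M D \<and>
     (\<forall>X\<in>D. \<forall>Y\<in>D. ae_eq M X Y \<longrightarrow> ae_eq M (I X) (I Y)) \<and>
     (\<forall>X\<in>D. I X \<in> L0 M H UNIV) \<and>
     (\<forall>X\<in>D. ae_le M (ess_inf M H {X}) (I X) \<and> ae_le M (I X) (ess_sup M H {X})) \<and>
     (\<forall>X\<in>D. \<forall>A\<in>L0 M H UNIV. rv_add X A \<in> D)"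

definition increasing_indicator :: "'a measure \<Rightarrow> ('a \<Rightarrow> ereal) set \<Rightarrow> (('a \<Rightarrow> ereal) \<Rightarrow> 'a \<Rightarrow> ereal) \<Rightarrow> bool" where
  "increasing_indicator M D I \<longleftrightarrow> (\<forall>X\<in>D. \<forall>Y\<in>D. ae_le M X Y \<longrightarrow> ae_le M (I X) (I Y))"

definition pos_homogeneous_indicator ::
  "'a measure \<Rightarrow> 'a measure \<Rightarrow> ('a \<Rightarrow> ereal) set \<Rightarrow> (('a \<Rightarrow> ereal) \<Rightarrow> 'a \<Rightarrow> ereal) \<Rightarrow> bool" where
  "pos_homogeneous_indicator M H D I \<longleftrightarrow>
     (\<forall>A\<in>L0 M H ereal_nonneg_reals. \<forall>X\<in>D. rv_mul A X \<in> D \<and> ae_eq M (I (rv_mul A X)) (rv_mul A (I X)))"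

definition superadditive_indicator :: "'a measure \<Rightarrow> ('a \<Rightarrow> ereal) set \<Rightarrow> (('a \<Rightarrow> ereal) \<Rightarrow> 'a \<Rightarrow> ereal) \<Rightarrow> bool" where
  "superadditive_indicator M D I \<longleftrightarrow>
     (\<forall>X\<in>D. \<forall>Y\<in>D. rv_add X Y \<in> D \<and> ae_le M (rv_add (I X) (I Y)) (I (rv_add X Y)))"

definition D_plus :: "'a measure \<Rightarrow> ('a \<Rightarrow> ereal) set \<Rightarrow> (('a \<Rightarrow> ereal) \<Rightarrow> 'a \<Rightarrow> ereal) \<Rightarrow> ('a \<Rightarrow> ereal) set" where
  "D_plus M D I = {X\<in>D. ae_le M (\<lambda>_. 0) (I X)}"

definition M_I :: "'a measure \<Rightarrow> 'a measure \<Rightarrow> ('a \<Rightarrow> ereal) set \<Rightarrow> (('a \<Rightarrow> ereal) \<Rightarrow> 'a \<Rightarrow> ereal)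
    \<Rightarrow> ('a \<Rightarrow> ereal) \<Rightarrow> ('a \<Rightarrow> ereal) set" where
  "M_I M H D I X = {Z \<in> L0 M H ereal_reals. \<exists>Y\<in>D_plus M D I. ae_eq M Z (rv_sub Y X)}"

definition rho_I :: "'a measure \<Rightarrow> 'a measure \<Rightarrow> ('a \<Rightarrow> ereal) set \<Rightarrow> (('a \<Rightarrow> ereal) \<Rightarrow> 'a \<Rightarrow> ereal)
    \<Rightarrow> ('a \<Rightarrow> ereal) \<Rightarrow> 'a \<Rightarrow> ereal" where
  "rho_I M H D I X = ess_inf M M (M_I M H D I X)"

definition Dom_rho_I :: "'a measure \<Rightarrow> 'a measure \<Rightarrow> ('a \<Rightarrow> ereal) set \<Rightarrow> (('a \<Rightarrow> ereal) \<Rightarrow> 'a \<Rightarrow> ereal)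
    \<Rightarrow> ('a \<Rightarrow> ereal) set" where
  "Dom_rho_I M H D I = {X \<in> L0 M M ereal_reals. M_I M H D I X \<noteq> {}}"

definition cond_risk_measure ::
  "'a measure \<Rightarrow> 'a measure \<Rightarrow> ('a \<Rightarrow> ereal) set \<Rightarrow> (('a \<Rightarrow> ereal) \<Rightarrow> 'a \<Rightarrow> ereal) \<Rightarrow> bool" where
  "cond_risk_measure M H D \<rho> \<longleftrightarrow>
     D \<subseteq> L0 M M ereal_reals \<and> (\<lambda>_. 0) \<in> D \<and> ae_closed M D \<and>
     (\<forall>X\<in>D. \<forall>A\<in>L0 M H ereal_reals. rv_add X A \<in> D) \<and>
     (\<forall>X\<in>D. \<rho> X \<in> L0 M H UNIV) \<and>
     ae_eq M (\<rho> (\<lambda>_. 0)) (\<lambda>_. 0) \<and>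
     (\<forall>X1\<in>D. \<forall>X2\<in>D. ae_le M X2 X1 \<longrightarrow> ae_le M (\<rho> X1) (\<rho> X2)) \<and>
     (\<forall>X\<in>D. \<forall>A\<in>L0 M H ereal_reals. ae_eq M (\<rho> (rv_add X A)) (rv_sub (\<rho> X) A))"

definition cond_convex_rm ::
  "'a measure \<Rightarrow> 'a measure \<Rightarrow> ('a \<Rightarrow> ereal) set \<Rightarrow> (('a \<Rightarrow> ereal) \<Rightarrow> 'a \<Rightarrow> ereal) \<Rightarrow> bool" where
  "cond_convex_rm M H D \<rho> \<longleftrightarrow> H_convex M H D \<and>
     (\<forall>X1\<in>D. \<forall>X2\<in>D. \<forall>A\<in>L0 M H ereal_unit.
        ae_le M (\<rho> (rv_comb A X1 X2)) (rv_comb A (\<rho> X1) (\<rho> X2)))"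

definition cond_pos_homogeneous_rm ::
  "'a measure \<Rightarrow> 'a measure \<Rightarrow> ('a \<Rightarrow> ereal) set \<Rightarrow> (('a \<Rightarrow> ereal) \<Rightarrow> 'a \<Rightarrow> ereal) \<Rightarrow> bool" where
  "cond_pos_homogeneous_rm M H D \<rho> \<longleftrightarrow>
     (\<forall>A\<in>L0 M H ereal_nonneg_reals. \<forall>X\<in>D. rv_mul A X \<in> D \<and> ae_eq M (\<rho> (rv_mul A X)) (rv_mul A (\<rho> X)))"

definition subadditive_rm :: "'a measure \<Rightarrow> ('a \<Rightarrow> ereal) set \<Rightarrow> (('a \<Rightarrow> ereal) \<Rightarrow> 'a \<Rightarrow> ereal) \<Rightarrow> bool" where
  "subadditive_rm M D \<rho> \<longleftrightarrow>
     (\<forall>X\<in>D. \<forall>Y\<in>D. rv_add X Y \<in> D \<and> ae_le M (\<rho> (rv_add X Y)) (rv_add (\<rho> X) (\<rho> Y)))"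

end

(*
  rho_I(X) is the essential infimum of M_I(X), the H-measurable real Z with X + Z in D_I^+.
  A measure-exhaustion argument shows that this essential infimum is the pointwise infimum
  of a sequence in M_I(X).  Every property of rho_I then comes from a closure property of
  M_I: M_I(X + A) = M_I(X) - A; M_I(X) grows with X because I is increasing; and convex
  combinations, sums and nonnegative H-measurable multiples of elements of M_I lie in M_I of
  the same combination of the arguments (by H-convexity of D_I^+, super-additivity,
  homogeneity of I).  Passing to the countable infimum gives the upper bounds.  The lower
  bound rho_I(A X) >= A rho_I(X) divides an element of M_I(A X) by A on {A > 0}; this works
  because a positively homogeneous indicator is local: I(1_B X) = 1_B I(X) for B in H.
*)

theory Submission
  imports Defs
begin

lemma eplus_ereal [simp]: "eplus (ereal a) (ereal b) = ereal (a + b)"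
  by (simp add: eplus_def)

lemma eminus_ereal [simp]: "eminus (ereal a) (ereal b) = ereal (a - b)"
  by (simp add: eminus_def eplus_def)

lemma eplus_zero_left [simp]: "eplus 0 x = x"
  by (auto simp: eplus_def)

lemma eplus_eq_plus: "a \<noteq> \<infinity> \<Longrightarrow> b \<noteq> \<infinity> \<Longrightarrow> eplus a b = a + b"
  by (auto simp: eplus_def)

lemma eplus_nonneg: "0 \<le> a \<Longrightarrow> 0 \<le> b \<Longrightarrow> 0 \<le> eplus a b"
  by (cases a; cases b) (auto simp: eplus_def)

lemma eminus_ereal_eq_ereal_iff: "eminus y (ereal x) = ereal z \<longleftrightarrow> y = ereal (x + z)"
  by (cases y) (auto simp: eminus_def eplus_def)

lemma eminus_ereal_right: "eminus x (ereal a) = x + ereal (- a)"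
  by (cases x) (auto simp: eminus_def eplus_def)

lemma ereal_reals_iff: "x \<in> ereal_reals \<longleftrightarrow> (\<exists>r. x = ereal r)"
  by (cases x) (auto simp: ereal_reals_def)

lemma ereal_unit_iff: "x \<in> ereal_unit \<longleftrightarrow> (\<exists>r. x = ereal r \<and> 0 \<le> r \<and> r \<le> 1)"
  by (cases x) (auto simp: ereal_unit_def)

lemma ereal_nonneg_reals_iff: "x \<in> ereal_nonneg_reals \<longleftrightarrow> (\<exists>r. x = ereal r \<and> 0 \<le> r)"
  by (cases x) (auto simp: ereal_nonneg_reals_def)

lemma ereal_nonneg_reals_subset_reals: "ereal_nonneg_reals \<subseteq> ereal_reals"
  by (auto simp: ereal_nonneg_reals_iff ereal_reals_iff)

lemma ereal_mult_le_of_le_divide: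
  assumes "0 < a" "r \<le> ereal z / ereal a"
  shows "ereal a * r \<le> ereal z"
  using assms by (cases r) (auto simp: field_simps)

lemma INF_ereal_ne_PInf: "(INF n. ereal (u n)) \<noteq> \<infinity>"
  using INF_lower[of undefined UNIV "\<lambda>n. ereal (u n)"] by auto

lemma INF_ereal_add_const:
  fixes u :: "'i \<Rightarrow> real" and c :: ereal
  assumes "I \<noteq> {}"
  shows "(INF n\<in>I. ereal (u n) + c) = (INF n\<in>I. ereal (u n)) + c"
proof (cases c)
  case (real r)
  have "(INF n\<in>I. ereal (u n) + c) - c \<le> (INF n\<in>I. ereal (u n))"
  proof (rule INF_greatest)
    fix n assume "n \<in> I"
    then have "(INF n\<in>I. ereal (u n) + c) \<le> ereal (u n) + c" by (rule INF_lower)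
    then show "(INF n\<in>I. ereal (u n) + c) - c \<le> ereal (u n)"
      using real by (simp add: ereal_minus_le_iff)
  qed
  then have "(INF n\<in>I. ereal (u n) + c) \<le> (INF n\<in>I. ereal (u n)) + c"
    using real by (simp add: ereal_minus_le_iff add.commute)
  moreover have "(INF n\<in>I. ereal (u n)) + c \<le> (INF n\<in>I. ereal (u n) + c)"
    by (intro INF_greatest add_right_mono INF_lower)
  ultimately show ?thesis by (rule antisym)
next
  case MInf
  obtain n where "n \<in> I" using assms by blast
  then have "(INF n\<in>I. ereal (u n)) \<noteq> \<infinity>"
    using INF_lower[of n I "\<lambda>n. ereal (u n)"] by auto
  then show ?thesis using MInf assms by simp
qed (simp add: assms)

lemma INF_ereal_mult_const:
  fixes u :: "'i \<Rightarrow> real"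
  assumes "I \<noteq> {}" "0 \<le> a"
  shows "(INF n\<in>I. ereal (a * u n)) = ereal a * (INF n\<in>I. ereal (u n))"
proof (cases "a = 0")
  case True then show ?thesis using assms(1) by (simp add: zero_ereal_def[symmetric])
next
  case False
  then have "0 < a" using assms(2) by simp
  have "ereal (1 / a) * (INF n\<in>I. ereal (a * u n)) \<le> (INF n\<in>I. ereal (u n))"
  proof (rule INF_greatest)
    fix n assume "n \<in> I"
    then have "ereal (1 / a) * (INF n\<in>I. ereal (a * u n)) \<le> ereal (1 / a) * ereal (a * u n)"
      using \<open>0 < a\<close> by (intro ereal_mult_left_mono INF_lower) auto
    then show "ereal (1 / a) * (INF n\<in>I. ereal (a * u n)) \<le> ereal (u n)"
      using \<open>0 < a\<close> by simp
  qed
  then have "ereal a * (ereal (1 / a) * (INF n\<in>I. ereal (a * u n))) \<le> ereal a * (INF n\<in>I. ereal (u n))"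
    using assms by (intro ereal_mult_left_mono) auto
  moreover have "ereal a * (ereal (1 / a) * y) = y" for y
    using \<open>0 < a\<close> by (cases y) auto
  moreover have "ereal a * (INF n\<in>I. ereal (u n)) \<le> (INF n\<in>I. ereal (a * u n))"
  proof (rule INF_greatest)
    fix n assume "n \<in> I"
    then have "ereal a * (INF n\<in>I. ereal (u n)) \<le> ereal a * ereal (u n)"
      using assms by (intro ereal_mult_left_mono INF_lower) auto
    then show "ereal a * (INF n\<in>I. ereal (u n)) \<le> ereal (a * u n)" by simp
  qed
  ultimately show ?thesis by (metis antisym)
qed

lemma ereal_le_INF_add_INF:
  fixes u v :: "'i \<Rightarrow> real"
  assumes "\<And>n m. x \<le> ereal (u n + v m)"
  shows "x \<le> (INF n. ereal (u n)) + (INF m. ereal (v m))"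
proof -
  have "x \<le> (INF m. ereal (v m)) + ereal (u n)" for n
  proof -
    have "x \<le> (INF m. ereal (v m) + ereal (u n))"
      using assms by (intro INF_greatest) (simp add: add.commute)
    also have "\<dots> = (INF m. ereal (v m)) + ereal (u n)" by (rule INF_ereal_add_const) simp
    finally show ?thesis .
  qed
  then have "x \<le> (INF n. ereal (u n) + (INF m. ereal (v m)))"
    by (intro INF_greatest) (simp add: add.commute)
  also have "\<dots> = (INF n. ereal (u n)) + (INF m. ereal (v m))" by (rule INF_ereal_add_const) simp
  finally show ?thesis .
qed

lemma ereal_le_INF_convex_comb:
  fixes u v :: "'i \<Rightarrow> real"
  assumes "0 \<le> a" "a \<le> 1" and "\<And>n m. x \<le> ereal (a * u n + (1 - a) * v m)"
  shows "x \<le> ereal a * (INF n. ereal (u n)) + ereal (1 - a) * (INF m. ereal (v m))"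
  using ereal_le_INF_add_INF[of x "\<lambda>n. a * u n" "\<lambda>m. (1 - a) * v m"] assms
  by (simp add: INF_ereal_mult_const)

lemma borel_measurable_eplus [measurable (raw)]:
  fixes f g :: "'a \<Rightarrow> ereal"
  assumes [measurable]: "f \<in> borel_measurable N" "g \<in> borel_measurable N"
  shows "(\<lambda>w. eplus (f w) (g w)) \<in> borel_measurable N"
  unfolding eplus_def by measurable

lemma borel_measurable_eminus [measurable (raw)]:
  fixes f g :: "'a \<Rightarrow> ereal"
  assumes [measurable]: "f \<in> borel_measurable N" "g \<in> borel_measurable N"
  shows "(\<lambda>w. eminus (f w) (g w)) \<in> borel_measurable N"
  unfolding eminus_def by measurable

lemma borel_measurable_rv_add [measurable]:
  "X \<in> borel_measurable N \<Longrightarrow> Y \<in> borel_measurable N \<Longrightarrow> rv_add X Y \<in> borel_measurable N"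
  unfolding rv_add_def by measurable

lemma borel_measurable_rv_sub [measurable]:
  "X \<in> borel_measurable N \<Longrightarrow> Y \<in> borel_measurable N \<Longrightarrow> rv_sub X Y \<in> borel_measurable N"
  unfolding rv_sub_def by measurable

lemma borel_measurable_rv_mul [measurable]:
  "A \<in> borel_measurable N \<Longrightarrow> X \<in> borel_measurable N \<Longrightarrow> rv_mul A X \<in> borel_measurable N"
  unfolding rv_mul_def by measurable

lemma borel_measurable_rv_comb [measurable]:
  "A \<in> borel_measurable N \<Longrightarrow> X \<in> borel_measurable N \<Longrightarrow> Y \<in> borel_measurable N \<Longrightarrow>
    rv_comb A X Y \<in> borel_measurable N"
  unfolding rv_comb_def by (intro borel_measurable_rv_add borel_measurable_rv_mul borel_measurable_ereal_diff) auto

lemma L0_iff: "X \<in> L0 M N G \<longleftrightarrow> X \<in> borel_measurable N \<and> (AE w in M. X w \<in> G)"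
  by (simp add: L0_def)

lemma L0_mono: "G \<subseteq> G' \<Longrightarrow> L0 M N G \<subseteq> L0 M N G'"
  unfolding L0_def by (auto elim!: eventually_mono)

lemma L0_reals_zero: "(\<lambda>_. 0) \<in> L0 M N ereal_reals"
  by (simp add: L0_iff ereal_reals_iff zero_ereal_def)

lemma L0_reals_rv_add:
  "X \<in> L0 M N ereal_reals \<Longrightarrow> Y \<in> L0 M N ereal_reals \<Longrightarrow> rv_add X Y \<in> L0 M N ereal_reals"
  unfolding L0_iff by (auto elim!: eventually_mono[OF eventually_conj] simp: rv_add_def ereal_reals_iff)

lemma L0_reals_rv_mul:
  "A \<in> L0 M N ereal_reals \<Longrightarrow> X \<in> L0 M N ereal_reals \<Longrightarrow> rv_mul A X \<in> L0 M N ereal_reals"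
  unfolding L0_iff by (auto elim!: eventually_mono[OF eventually_conj] simp: rv_mul_def ereal_reals_iff)

lemma L0_reals_rv_comb:
  "A \<in> L0 M N ereal_unit \<Longrightarrow> X \<in> L0 M N ereal_reals \<Longrightarrow> Y \<in> L0 M N ereal_reals \<Longrightarrow>
    rv_comb A X Y \<in> L0 M N ereal_reals"
  unfolding L0_iff
  by (auto elim!: eventually_mono[OF eventually_conj[OF _ eventually_conj]]
      simp: rv_comb_def rv_add_def rv_mul_def ereal_reals_iff ereal_unit_iff one_ereal_def)

lemma L0_nonneg_inverse_or_zero:
  assumes "A \<in> L0 M N ereal_nonneg_reals"
  shows "(\<lambda>w. if A w = 0 then 0 else inverse (A w)) \<in> L0 M N ereal_nonneg_reals"
proof -
  have [measurable]: "A \<in> borel_measurable N" using assms by (simp add: L0_iff)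
  have "AE w in M. A w \<in> ereal_nonneg_reals" using assms by (simp add: L0_iff)
  then show ?thesis unfolding L0_iff
    by (auto elim!: eventually_mono simp: ereal_nonneg_reals_iff)
qed

lemma L0_reals_divide_or_else:
  assumes "A \<in> L0 M N ereal_nonneg_reals" "Z \<in> L0 M N ereal_reals" "Z0 \<in> L0 M N ereal_reals"
  shows "(\<lambda>w. if A w = 0 then Z0 w else Z w / A w) \<in> L0 M N ereal_reals"
proof -
  have [measurable]: "A \<in> borel_measurable N" "Z \<in> borel_measurable N" "Z0 \<in> borel_measurable N"
    using assms by (simp_all add: L0_iff)
  have "AE w in M. A w \<in> ereal_nonneg_reals" "AE w in M. Z w \<in> ereal_reals" "AE w in M. Z0 w \<in> ereal_reals"
    using assms by (simp_all add: L0_iff)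
  then have "AE w in M. (if A w = 0 then Z0 w else Z w / A w) \<in> ereal_reals"
    by eventually_elim (auto simp: ereal_reals_iff ereal_nonneg_reals_iff)
  moreover have "(\<lambda>w. if A w = 0 then Z0 w else Z w / A w) \<in> borel_measurable N" by measurable
  ultimately show ?thesis by (simp add: L0_iff)
qed

lemma measurable_subalgebra_AE_cong:
  assumes sub: "subalgebra M H" and null: "null_sets M \<subseteq> sets H"
    and f: "f \<in> M \<rightarrow>\<^sub>M N" and g: "g \<in> H \<rightarrow>\<^sub>M N" and ae: "AE w in M. f w = g w"
  shows "f \<in> H \<rightarrow>\<^sub>M N"
proof -
  have space_H: "space H = space M" using sub by (simp add: subalgebra_def)
  from ae obtain E where E': "{w \<in> space M. f w \<noteq> g w} \<subseteq> E" "emeasure M E = 0" "E \<in> sets M"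
    by (rule AE_E)
  then have E: "{w \<in> space M. f w \<noteq> g w} \<subseteq> E" "E \<in> null_sets M" by (auto intro: null_setsI)
  show ?thesis
  proof (rule measurableI)
    fix w assume "w \<in> space H"
    then show "f w \<in> space N" using f space_H by (auto dest: measurable_space)
  next
    fix A assume A: "A \<in> sets N"
    have "f -` A \<inter> space H = ((g -` A \<inter> space H) - E) \<union> ((f -` A \<inter> space M) \<inter> E)"
      using E(1) space_H by auto
    moreover have "g -` A \<inter> space H \<in> sets H" using g A by (rule measurable_sets)
    moreover have "(f -` A \<inter> space M) \<inter> E \<in> null_sets M"
      using E(2) measurable_sets[OF f A] by (rule null_set_Int1)
    ultimately show "f -` A \<inter> space H \<in> sets H"
      using E(2) null by (metis sets.Diff sets.Un subsetD null_setsD2)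
  qed
qed

section \<open>Essential suprema of families\<close>

lemma is_ess_sup_AE_unique:
  assumes "is_ess_sup M N G Y1" "is_ess_sup M N G Y2"
  shows "AE w in M. Y1 w = Y2 w"
proof -
  have "ae_le M Y1 Y2" "ae_le M Y2 Y1" using assms unfolding is_ess_sup_def by blast+
  then show ?thesis unfolding ae_le_def by eventually_elim auto
qed

lemma is_ess_sup_ess_sup: "is_ess_sup M N G Y \<Longrightarrow> is_ess_sup M N G (ess_sup M N G)"
  unfolding ess_sup_def by (rule someI[where P="is_ess_sup M N G"])

lemma is_ess_sup_singleton: "X \<in> borel_measurable N \<Longrightarrow> is_ess_sup M N {X} X"
  by (auto simp: is_ess_sup_def ae_le_def)

lemma ess_sup_singleton_le:
  "X \<in> borel_measurable N \<Longrightarrow> AE w in M. ess_sup M N {X} w \<le> X w"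
  using is_ess_sup_ess_sup[OF is_ess_sup_singleton] unfolding is_ess_sup_def ae_le_def by blast

lemma ess_inf_singleton_ge:
  assumes "X \<in> borel_measurable N"
  shows "AE w in M. X w \<le> ess_inf M N {X} w"
proof -
  have "(\<lambda>w. - X w) \<in> borel_measurable N" using assms by measurable
  from ess_sup_singleton_le[OF this, of M] show ?thesis
    unfolding ess_inf_def by (auto elim!: eventually_mono) (metis ereal_minus_le_minus ereal_uminus_uminus)
qed

lemma (in finite_measure) countable_subfamily_max_union:
  assumes "F ` I \<subseteq> sets M"
  shows "\<exists>J. countable J \<and> J \<subseteq> I \<and>
    (\<forall>J'. countable J' \<longrightarrow> J' \<subseteq> I \<longrightarrow> measure M (\<Union>j\<in>J'. F j) \<le> measure M (\<Union>j\<in>J. F j))"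
proof -
  have U_sets: "(\<Union>j\<in>J. F j) \<in> sets M" if "countable J" "J \<subseteq> I" for J
    using that assms by (intro sets.countable_UN') auto
  define V where "V = (\<lambda>J. measure M (\<Union>j\<in>J. F j)) ` {J. countable J \<and> J \<subseteq> I}"
  have V_ne: "V \<noteq> {}" unfolding V_def by auto
  have V_bdd: "bdd_above V"
    unfolding V_def using U_sets by (intro bdd_aboveI[of _ "measure M (space M)"]) (auto intro!: bounded_measure)
  have "\<exists>J. countable J \<and> J \<subseteq> I \<and> Sup V - 1 / Suc n < measure M (\<Union>j\<in>J. F j)" for n :: nat
  proof -
    have "Sup V - 1 / Suc n < Sup V" by simp
    then obtain x where "x \<in> V" "Sup V - 1 / Suc n < x"
      using less_cSup_iff[OF V_ne V_bdd] by blast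
    then show ?thesis unfolding V_def by auto
  qed
  then obtain Jn where Jn: "\<And>n. countable (Jn n) \<and> Jn n \<subseteq> I \<and> Sup V - 1 / Suc n < measure M (\<Union>j\<in>Jn n. F j)"
    by metis
  define J where "J = (\<Union>n. Jn n)"
  have J: "countable J" "J \<subseteq> I" unfolding J_def using Jn by auto
  have near: "Sup V - 1 / Suc n < measure M (\<Union>j\<in>J. F j)" for n
  proof -
    have "measure M (\<Union>j\<in>Jn n. F j) \<le> measure M (\<Union>j\<in>J. F j)"
      using U_sets J Jn unfolding J_def by (intro finite_measure_mono) auto
    then show ?thesis using Jn[of n] by linarith
  qed
  have "Sup V \<le> measure M (\<Union>j\<in>J. F j)"
  proof (rule ccontr)
    assume "\<not> Sup V \<le> measure M (\<Union>j\<in>J. F j)"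
    then have "0 < Sup V - measure M (\<Union>j\<in>J. F j)" by simp
    from reals_Archimedean[OF this] obtain n where "inverse (real (Suc n)) < Sup V - measure M (\<Union>j\<in>J. F j)" ..
    with near[of n] show False by (simp add: inverse_eq_divide)
  qed
  moreover have "measure M (\<Union>j\<in>J'. F j) \<le> Sup V" if "countable J'" "J' \<subseteq> I" for J'
    using that V_bdd unfolding V_def by (intro cSup_upper) auto
  ultimately show ?thesis using J by force
qed

lemma (in finite_measure) countable_subfamily_essential_union:
  assumes "F ` I \<subseteq> sets M"
  shows "\<exists>J. countable J \<and> J \<subseteq> I \<and> (\<forall>i\<in>I. F i - (\<Union>j\<in>J. F j) \<in> null_sets M)"
proof -
  obtain J where J: "countable J" "J \<subseteq> I"
    and max: "\<And>J'. countable J' \<Longrightarrow> J' \<subseteq> I \<Longrightarrow> measure M (\<Union>j\<in>J'. F j) \<le> measure M (\<Union>j\<in>J. F j)"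
    using countable_subfamily_max_union[OF assms] by blast
  have "F i - (\<Union>j\<in>J. F j) \<in> null_sets M" if i: "i \<in> I" for i
  proof -
    have U: "(\<Union>j\<in>J. F j) \<in> sets M" "(\<Union>j\<in>insert i J. F j) \<in> sets M"
      using J i assms by (auto intro!: sets.countable_UN')
    have "measure M (F i - (\<Union>j\<in>J. F j)) = measure M (\<Union>j\<in>insert i J. F j) - measure M (\<Union>j\<in>J. F j)"
      using U finite_measure_Diff[of "\<Union>j\<in>insert i J. F j" "\<Union>j\<in>J. F j"]
      by (simp add: Un_Diff subset_insertI)
    also have "\<dots> \<le> 0" using max[of "insert i J"] J i by simp
    finally have "measure M (F i - (\<Union>j\<in>J. F j)) = 0" using measure_nonneg antisym by blast
    moreover have "F i - (\<Union>j\<in>J. F j) \<in> sets M" using U i assms by auto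
    ultimately show ?thesis by (simp add: null_sets_def emeasure_eq_measure)
  qed
  with J show ?thesis by blast
qed

lemma ereal_le_Sup_of_rationals:
  fixes x :: ereal
  assumes "\<And>q::rat. ereal (real_of_rat q) < x \<Longrightarrow> \<exists>y\<in>S. ereal (real_of_rat q) < y"
  shows "x \<le> Sup S"
proof (rule ccontr)
  assume "\<not> x \<le> Sup S"
  then have "Sup S < x" by simp
  from ereal_dense3[OF this] obtain q where q: "Sup S < ereal (real_of_rat q)" "ereal (real_of_rat q) < x"
    by blast
  with assms obtain y where "y \<in> S" "ereal (real_of_rat q) < y" by blast
  with q(1) show False using Sup_upper[of y S] by simp
qed

lemma is_ess_sup_countable_SUP:
  assumes "countable C" "C \<subseteq> G" "G \<subseteq> borel_measurable M"
    and "\<And>f. f \<in> G \<Longrightarrow> AE w in M. f w \<le> (SUP g\<in>C. g w)"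
  shows "is_ess_sup M M G (\<lambda>w. SUP g\<in>C. g w)"
  unfolding is_ess_sup_def ae_le_def
proof (intro conjI ballI allI impI)
  show "(\<lambda>w. SUP g\<in>C. g w) \<in> borel_measurable M"
    using assms(1-3) by (intro borel_measurable_SUP) auto
  fix Z :: "'a \<Rightarrow> ereal" assume "\<forall>f\<in>G. AE w in M. f w \<le> Z w"
  then have "AE w in M. \<forall>f\<in>C. f w \<le> Z w"
    using assms(1,2) by (intro AE_ball_countable') auto
  then show "AE w in M. (SUP g\<in>C. g w) \<le> Z w" by eventually_elim (auto intro: SUP_least)
qed (use assms(4) in blast)

lemma (in finite_measure) ess_sup_countable_SUP:
  fixes G :: "('a \<Rightarrow> ereal) set"
  assumes G: "G \<subseteq> borel_measurable M" "G \<noteq> {}"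
  shows "\<exists>g :: nat \<Rightarrow> 'a \<Rightarrow> ereal. range g \<subseteq> G \<and> is_ess_sup M M G (\<lambda>w. SUP n. g n w)"
proof -
  define E where "E q f = {w\<in>space M. ereal (real_of_rat q) < f w}" for q and f :: "'a \<Rightarrow> ereal"
  have "\<forall>q. \<exists>J. countable J \<and> J \<subseteq> G \<and> (\<forall>f\<in>G. E q f - (\<Union>g\<in>J. E q g) \<in> null_sets M)"
    using G(1) unfolding E_def by (intro allI countable_subfamily_essential_union) (auto simp: subset_eq)
  then obtain J where J: "\<And>q. countable (J q) \<and> J q \<subseteq> G \<and> (\<forall>f\<in>G. E q f - (\<Union>g\<in>J q. E q g) \<in> null_sets M)"
    by metis
  obtain g0 where g0: "g0 \<in> G" using G(2) by blast
  define C where "C = insert g0 (\<Union>q. J q)"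
  have C: "countable C" "C \<subseteq> G" "C \<noteq> {}" unfolding C_def using J g0 by auto
  have "AE w in M. f w \<le> (SUP g\<in>C. g w)" if f: "f \<in> G" for f
  proof -
    have "AE w in M. ereal (real_of_rat q) < f w \<longrightarrow> (\<exists>g\<in>C. ereal (real_of_rat q) < g w)" for q
      using J[of q] f by (intro AE_I'[where N="E q f - (\<Union>g\<in>J q. E q g)"]) (auto simp: E_def C_def)
    then have "AE w in M. \<forall>q. ereal (real_of_rat q) < f w \<longrightarrow> (\<exists>g\<in>C. ereal (real_of_rat q) < g w)"
      by (simp add: AE_all_countable)
    then show ?thesis by eventually_elim (rule ereal_le_Sup_of_rationals, blast)
  qed
  with C G(1) have "is_ess_sup M M G (\<lambda>w. SUP g\<in>C. g w)" by (intro is_ess_sup_countable_SUP)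
  moreover define g where "g = from_nat_into C"
  then have "range g = C" using C by simp
  then have "(\<lambda>w. SUP g\<in>C. g w) = (\<lambda>w. SUP n. g n w)" by (auto simp: image_comp)
  ultimately show ?thesis using \<open>range g = C\<close> C(2) by (intro exI[of _ g] conjI) simp_all
qed

lemma uminus_image_borel_measurable:
  "G \<subseteq> borel_measurable M \<Longrightarrow> (\<lambda>X w. - X w :: ereal) ` G \<subseteq> borel_measurable M"
  by auto

context finite_measure
begin

lemma is_ess_sup_ess_sup_family:
  assumes "G \<subseteq> borel_measurable M"
  shows "is_ess_sup M M G (ess_sup M M G)"
proof (cases "G = {}")
  case True
  then have "is_ess_sup M M G (\<lambda>_. -\<infinity>)" by (auto simp: is_ess_sup_def ae_le_def)
  then show ?thesis by (rule is_ess_sup_ess_sup)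
next
  case False
  then show ?thesis using ess_sup_countable_SUP[OF assms] is_ess_sup_ess_sup by blast
qed

lemma borel_measurable_ess_inf:
  assumes "G \<subseteq> borel_measurable M"
  shows "ess_inf M M G \<in> borel_measurable M"
proof -
  have [measurable]: "ess_sup M M ((\<lambda>X w. - X w) ` G) \<in> borel_measurable M"
    using is_ess_sup_ess_sup_family[OF uminus_image_borel_measurable[OF assms]]
    unfolding is_ess_sup_def by blast
  show ?thesis unfolding ess_inf_def by measurable
qed

lemma ess_inf_lower:
  assumes "G \<subseteq> borel_measurable M" "Z \<in> G"
  shows "AE w in M. ess_inf M M G w \<le> Z w"
proof -
  have "ae_le M (\<lambda>w. - Z w) (ess_sup M M ((\<lambda>X w. - X w) ` G))"
    using is_ess_sup_ess_sup_family[OF uminus_image_borel_measurable[OF assms(1)]] assms(2)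
    unfolding is_ess_sup_def by blast
  then show ?thesis unfolding ae_le_def ess_inf_def
    by eventually_elim (simp add: ereal_uminus_le_reorder)
qed

lemma ess_inf_greatest:
  assumes "G \<subseteq> borel_measurable M" "W \<in> borel_measurable M"
    and "\<And>Z. Z \<in> G \<Longrightarrow> AE w in M. W w \<le> Z w"
  shows "AE w in M. W w \<le> ess_inf M M G w"
proof -
  have "\<forall>X\<in>(\<lambda>X w. - X w) ` G. ae_le M X (\<lambda>w. - W w)"
    using assms(3) unfolding ae_le_def by (auto elim!: eventually_mono)
  moreover have "(\<lambda>w. - W w) \<in> borel_measurable M" using assms(2) by measurable
  ultimately have "ae_le M (ess_sup M M ((\<lambda>X w. - X w) ` G)) (\<lambda>w. - W w)"
    using is_ess_sup_ess_sup_family[OF uminus_image_borel_measurable[OF assms(1)]]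
    unfolding is_ess_sup_def by blast
  then show ?thesis unfolding ae_le_def ess_inf_def
    by eventually_elim (metis ereal_minus_le_minus ereal_uminus_uminus)
qed

lemma ess_inf_countable_INF:
  assumes "G \<subseteq> borel_measurable M" "G \<noteq> {}"
  shows "\<exists>g :: nat \<Rightarrow> 'a \<Rightarrow> ereal. range g \<subseteq> G \<and> (AE w in M. ess_inf M M G w = (INF n. g n w))"
proof -
  let ?G = "(\<lambda>X w. - X w) ` G"
  obtain h :: "nat \<Rightarrow> 'a \<Rightarrow> ereal" where h: "range h \<subseteq> ?G" "is_ess_sup M M ?G (\<lambda>w. SUP n. h n w)"
    using ess_sup_countable_SUP[OF uminus_image_borel_measurable[OF assms(1)]] assms(2) by blast
  define g where "g n = (\<lambda>w. - h n w)" for n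
  have "range g \<subseteq> G" using h(1) by (auto simp: g_def)
  moreover have "AE w in M. ess_inf M M G w = (INF n. g n w)"
    using is_ess_sup_AE_unique[OF is_ess_sup_ess_sup_family[OF uminus_image_borel_measurable[OF assms(1)]] h(2)]
    by eventually_elim (simp add: ess_inf_def g_def ereal_INF_uminus_eq)
  ultimately show ?thesis by blast
qed

end

section \<open>The risk measure of an increasing conditional indicator\<close>

locale increasing_cond_indicator = prob_space M
  for M :: "'a measure" +
  fixes H :: "'a measure" and D :: "('a \<Rightarrow> ereal) set" and I :: "('a \<Rightarrow> ereal) \<Rightarrow> 'a \<Rightarrow> ereal"
  assumes subalg: "subalgebra M H" and null_sets_subalg: "null_sets M \<subseteq> sets H"
    and cond_indicator: "cond_indicator M H D I" and increasing: "increasing_indicator M D I"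
begin

abbreviation "DP \<equiv> D_plus M D I"
abbreviation "MI \<equiv> M_I M H D I"
abbreviation "rho \<equiv> rho_I M H D I"
abbreviation "Dom \<equiv> Dom_rho_I M H D I"

lemma space_subalg: "space H = space M"
  using subalg by (simp add: subalgebra_def)

lemma borel_measurable_subalg: "f \<in> borel_measurable H \<Longrightarrow> f \<in> borel_measurable M"
  using measurable_from_subalg[OF subalg] .

lemma L0_subalg: "X \<in> L0 M H G \<Longrightarrow> X \<in> L0 M M G"
  by (simp add: L0_iff borel_measurable_subalg)

lemma L0_nonneg_imp_reals_subalg: "A \<in> L0 M H ereal_nonneg_reals \<Longrightarrow> A \<in> L0 M M ereal_reals"
  using L0_mono[OF ereal_nonneg_reals_subset_reals] L0_subalg by blast

lemma zero_in_D: "(\<lambda>_. 0) \<in> D"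
  using cond_indicator unfolding cond_indicator_def by blast

lemma D_AE_cong: "X \<in> D \<Longrightarrow> Y \<in> borel_measurable M \<Longrightarrow> AE w in M. X w = Y w \<Longrightarrow> Y \<in> D"
  using cond_indicator unfolding cond_indicator_def ae_closed_def ae_eq_def by blast

lemma I_AE_cong: "X \<in> D \<Longrightarrow> Y \<in> D \<Longrightarrow> AE w in M. X w = Y w \<Longrightarrow> AE w in M. I X w = I Y w"
  using cond_indicator unfolding cond_indicator_def ae_eq_def by blast

lemma D_add_H: "X \<in> D \<Longrightarrow> A \<in> borel_measurable H \<Longrightarrow> rv_add X A \<in> D"
  using cond_indicator unfolding cond_indicator_def L0_def by blast

lemma I_mono: "X \<in> D \<Longrightarrow> Y \<in> D \<Longrightarrow> AE w in M. X w \<le> Y w \<Longrightarrow> AE w in M. I X w \<le> I Y w"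
  using increasing unfolding increasing_indicator_def ae_le_def by blast

lemma D_of_H_measurable: "A \<in> borel_measurable H \<Longrightarrow> A \<in> D"
  using D_add_H[OF zero_in_D] by (simp add: rv_add_def)

lemma I_le_of_H_measurable: assumes "X \<in> borel_measurable H" shows "AE w in M. I X w \<le> X w"
proof -
  have "ae_le M (I X) (ess_sup M H {X})"
    using cond_indicator D_of_H_measurable[OF assms] unfolding cond_indicator_def by blast
  with ess_sup_singleton_le[OF assms, of M] show ?thesis
    unfolding ae_le_def by eventually_elim auto
qed

lemma I_ge_of_H_measurable: assumes "X \<in> borel_measurable H" shows "AE w in M. X w \<le> I X w"
proof -
  have "ae_le M (ess_inf M H {X}) (I X)"
    using cond_indicator D_of_H_measurable[OF assms] unfolding cond_indicator_def by blast
  with ess_inf_singleton_ge[OF assms, of M] show ?thesis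
    unfolding ae_le_def by eventually_elim auto
qed

lemma DP_iff: "Y \<in> DP \<longleftrightarrow> Y \<in> D \<and> (AE w in M. 0 \<le> I Y w)"
  by (simp add: D_plus_def ae_le_def)

lemma DP_AE_cong:
  assumes "Y \<in> DP" "Y' \<in> borel_measurable M" "AE w in M. Y' w = Y w"
  shows "Y' \<in> DP"
proof -
  have "Y \<in> D" "AE w in M. 0 \<le> I Y w" using assms(1) by (auto simp: DP_iff)
  moreover have "AE w in M. Y w = Y' w" using assms(3) by (auto elim: eventually_mono)
  then have "Y' \<in> D" using D_AE_cong[OF \<open>Y \<in> D\<close> assms(2)] by blast
  moreover have "AE w in M. I Y' w = I Y w" using I_AE_cong \<open>Y \<in> D\<close> \<open>Y' \<in> D\<close> assms(3) by blast
  ultimately show ?thesis unfolding DP_iff by (auto elim: eventually_mono[OF eventually_conj])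
qed

lemma MI_iff:
  assumes X: "X \<in> L0 M M ereal_reals"
  shows "Z \<in> MI X \<longleftrightarrow> Z \<in> L0 M H ereal_reals \<and> rv_add X Z \<in> DP"
proof
  have Xr: "AE w in M. X w \<in> ereal_reals" using X by (simp add: L0_iff)
  assume "Z \<in> MI X"
  then obtain Y where Z: "Z \<in> L0 M H ereal_reals" and "Y \<in> DP" and ZY: "AE w in M. Z w = eminus (Y w) (X w)"
    by (auto simp: M_I_def ae_eq_def rv_sub_def)
  have Zr: "AE w in M. Z w \<in> ereal_reals" using Z by (simp add: L0_iff)
  have "AE w in M. rv_add X Z w = Y w"
    using ZY Xr Zr by eventually_elim (auto simp: ereal_reals_iff rv_add_def eminus_ereal_eq_ereal_iff)
  moreover have "rv_add X Z \<in> borel_measurable M"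
    by (intro borel_measurable_rv_add) (use X Z in \<open>auto simp: L0_iff borel_measurable_subalg\<close>)
  ultimately show "Z \<in> L0 M H ereal_reals \<and> rv_add X Z \<in> DP" using Z \<open>Y \<in> DP\<close> by (blast intro: DP_AE_cong)
next
  assume Z: "Z \<in> L0 M H ereal_reals \<and> rv_add X Z \<in> DP"
  have Xr: "AE w in M. X w \<in> ereal_reals" and Zr: "AE w in M. Z w \<in> ereal_reals"
    using X Z by (simp_all add: L0_iff)
  have "AE w in M. Z w = eminus (rv_add X Z w) (X w)"
    using Xr Zr by eventually_elim (auto simp: ereal_reals_iff rv_add_def)
  with Z show "Z \<in> MI X" by (auto simp: M_I_def ae_eq_def rv_sub_def)
qed

lemma MI_L0: "Z \<in> MI X \<Longrightarrow> Z \<in> L0 M H ereal_reals"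
  by (simp add: M_I_def)

lemma MI_eq_of_AE_eq:
  assumes "AE w in M. X w = X' w"
  shows "MI X = MI X'"
proof -
  have "(AE w in M. Z w = eminus (Y w) (X w)) \<longleftrightarrow> (AE w in M. Z w = eminus (Y w) (X' w))" for Z Y
    using assms by (intro eventually_subst) (auto elim: eventually_mono)
  then show ?thesis unfolding M_I_def ae_eq_def rv_sub_def by simp
qed

lemma rho_eq_of_AE_eq: "AE w in M. X w = X' w \<Longrightarrow> rho X = rho X'"
  unfolding rho_I_def by (simp add: MI_eq_of_AE_eq)

lemma MI_AE_cong:
  assumes "Z \<in> MI X" "Z' \<in> borel_measurable H" "AE w in M. Z' w = Z w"
  shows "Z' \<in> MI X"
proof -
  obtain Y where "Y \<in> DP" "AE w in M. Z w = rv_sub Y X w" "AE w in M. Z w \<in> ereal_reals"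
    using assms(1) unfolding M_I_def ae_eq_def L0_iff by blast
  moreover have "AE w in M. Z' w = rv_sub Y X w \<and> Z' w \<in> ereal_reals"
    using assms(3) calculation(2,3) by eventually_elim simp
  ultimately show ?thesis using assms(2) unfolding M_I_def ae_eq_def L0_iff by auto
qed

lemma Dom_L0: "X \<in> Dom \<Longrightarrow> X \<in> L0 M M ereal_reals"
  by (simp add: Dom_rho_I_def)

lemma DomI: "X \<in> L0 M M ereal_reals \<Longrightarrow> Z \<in> MI X \<Longrightarrow> X \<in> Dom"
  by (auto simp: Dom_rho_I_def)

lemma Dom_in_D:
  assumes "X \<in> Dom" shows "X \<in> D"
proof -
  obtain Z where Z: "Z \<in> MI X" using assms by (auto simp: Dom_rho_I_def)
  with Dom_L0[OF assms] have XZ: "rv_add X Z \<in> D" "Z \<in> L0 M H ereal_reals"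
    by (auto simp: MI_iff DP_iff)
  have Xr: "AE w in M. X w \<in> ereal_reals" and Zr: "AE w in M. Z w \<in> ereal_reals"
    using Dom_L0[OF assms] XZ(2) by (simp_all add: L0_iff)
  have "rv_add (rv_add X Z) (\<lambda>w. - Z w) \<in> D"
    using XZ by (auto simp: L0_iff intro: D_add_H)
  moreover have "X \<in> borel_measurable M" using Dom_L0[OF assms] by (simp add: L0_iff)
  moreover have "AE w in M. rv_add (rv_add X Z) (\<lambda>w. - Z w) w = X w"
    using Xr Zr by eventually_elim (auto simp: ereal_reals_iff rv_add_def)
  ultimately show ?thesis by (rule D_AE_cong)
qed

lemma MI_subset_borel: "MI X \<subseteq> borel_measurable M"
  using MI_L0 by (auto simp: L0_iff borel_measurable_subalg)

lemma borel_measurable_rho [measurable]: "rho X \<in> borel_measurable M"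
  unfolding rho_I_def by (rule borel_measurable_ess_inf[OF MI_subset_borel])

lemma rho_le: "Z \<in> MI X \<Longrightarrow> AE w in M. rho X w \<le> Z w"
  unfolding rho_I_def by (rule ess_inf_lower[OF MI_subset_borel])

lemma rho_greatest:
  "W \<in> borel_measurable M \<Longrightarrow> (\<And>Z. Z \<in> MI X \<Longrightarrow> AE w in M. W w \<le> Z w) \<Longrightarrow> AE w in M. W w \<le> rho X w"
  unfolding rho_I_def by (rule ess_inf_greatest[OF MI_subset_borel])

lemma rho_eq_INF:
  assumes "X \<in> Dom"
  obtains u :: "nat \<Rightarrow> 'a \<Rightarrow> real"
  where "\<And>n. (\<lambda>w. ereal (u n w)) \<in> MI X" "AE w in M. rho X w = (INF n. ereal (u n w))"
proof -
  obtain g :: "nat \<Rightarrow> 'a \<Rightarrow> ereal" where g: "range g \<subseteq> MI X" "AE w in M. rho X w = (INF n. g n w)"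
    using ess_inf_countable_INF[OF MI_subset_borel] assms unfolding rho_I_def Dom_rho_I_def by blast
  define u where "u n w = real_of_ereal (g n w)" for n w
  have g_real: "AE w in M. ereal (u n w) = g n w" for n
  proof -
    have "AE w in M. g n w \<in> ereal_reals" using MI_L0[OF range_subsetD[OF g(1)]] by (simp add: L0_iff)
    then show ?thesis unfolding u_def by eventually_elim (auto simp: ereal_reals_iff)
  qed
  have "(\<lambda>w. ereal (u n w)) \<in> MI X" for n
  proof (rule MI_AE_cong[OF range_subsetD[OF g(1)]])
    have [measurable]: "g n \<in> borel_measurable H" using MI_L0[OF range_subsetD[OF g(1)]] by (simp add: L0_iff)
    show "(\<lambda>w. ereal (u n w)) \<in> borel_measurable H" unfolding u_def by measurable
  qed (rule g_real)
  moreover have "AE w in M. rho X w = (INF n. ereal (u n w))"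
  proof -
    have "AE w in M. \<forall>n. ereal (u n w) = g n w" by (simp add: AE_all_countable g_real)
    with g(2) show ?thesis by eventually_elim simp
  qed
  ultimately show ?thesis using that by blast
qed

lemma rho_borel_H:
  assumes "X \<in> Dom" shows "rho X \<in> borel_measurable H"
proof -
  obtain u :: "nat \<Rightarrow> 'a \<Rightarrow> real" where u: "\<And>n. (\<lambda>w. ereal (u n w)) \<in> MI X" "AE w in M. rho X w = (INF n. ereal (u n w))"
    using rho_eq_INF[OF assms] by blast
  have "(\<lambda>w. ereal (u n w)) \<in> borel_measurable H" for n using MI_L0[OF u(1)] by (simp add: L0_iff)
  then have "(\<lambda>w. INF n. ereal (u n w)) \<in> borel_measurable H" by measurable
  with u(2) show ?thesis
    by (intro measurable_subalgebra_AE_cong[OF subalg null_sets_subalg borel_measurable_rho])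
qed

subsection \<open>Normalization, cash additivity and monotonicity\<close>

lemma zero_in_MI_zero: "(\<lambda>_. 0) \<in> MI (\<lambda>_. 0)"
proof -
  have "(\<lambda>_. 0) \<in> DP" using I_ge_of_H_measurable[of "\<lambda>_. 0"] zero_in_D by (simp add: DP_iff)
  then show ?thesis by (simp add: MI_iff L0_reals_zero rv_add_def)
qed

lemma zero_in_Dom: "(\<lambda>_. 0) \<in> Dom"
  using DomI[OF L0_reals_zero zero_in_MI_zero] .

lemma rho_zero: "AE w in M. rho (\<lambda>_. 0) w = 0"
proof -
  have "AE w in M. 0 \<le> rho (\<lambda>_. 0) w"
  proof (rule rho_greatest)
    fix Z assume "Z \<in> MI (\<lambda>_. 0)"
    then have "Z \<in> DP" "Z \<in> borel_measurable H"
      using MI_iff[OF L0_reals_zero, of Z] by (simp_all add: rv_add_def L0_iff)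
    then have "AE w in M. 0 \<le> I Z w" "AE w in M. I Z w \<le> Z w"
      using I_le_of_H_measurable by (auto simp: DP_iff)
    then show "AE w in M. 0 \<le> Z w" by eventually_elim auto
  qed simp
  with rho_le[OF zero_in_MI_zero] show ?thesis by eventually_elim simp
qed

lemma Dom_AE_cong:
  assumes "X \<in> Dom" "Y \<in> borel_measurable M" "AE w in M. X w = Y w"
  shows "Y \<in> Dom"
proof -
  have "AE w in M. Y w \<in> ereal_reals"
    using Dom_L0[OF assms(1)] assms(3) unfolding L0_iff by (auto elim: eventually_mono[OF eventually_conj])
  with assms show ?thesis by (auto simp: Dom_rho_I_def L0_iff MI_eq_of_AE_eq[OF assms(3)])
qed

lemma MI_add_cash:
  assumes X: "X \<in> L0 M M ereal_reals" and A: "A \<in> L0 M H ereal_reals" and Z: "Z \<in> MI X"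
  shows "rv_sub Z A \<in> MI (rv_add X A)"
proof -
  have Z': "Z \<in> L0 M H ereal_reals" "rv_add X Z \<in> DP" using Z X by (auto simp: MI_iff)
  have "rv_sub Z A \<in> L0 M H ereal_reals"
    using Z'(1) A unfolding L0_iff
    by (auto elim!: eventually_mono[OF eventually_conj] simp: rv_sub_def ereal_reals_iff)
  moreover have "AE w in M. rv_add (rv_add X A) (rv_sub Z A) w = rv_add X Z w"
    using X Z'(1) A unfolding L0_iff
    by (auto elim!: eventually_mono[OF eventually_conj[OF _ eventually_conj]]
        simp: rv_add_def rv_sub_def ereal_reals_iff)
  moreover have "rv_add (rv_add X A) (rv_sub Z A) \<in> borel_measurable M"
  proof -
    have [measurable]: "X \<in> borel_measurable M" "Z \<in> borel_measurable M" "A \<in> borel_measurable M"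
      using X Z'(1) A by (auto simp: L0_iff borel_measurable_subalg)
    show ?thesis by measurable
  qed
  ultimately have "rv_add (rv_add X A) (rv_sub Z A) \<in> DP"
    using Z'(2) by (metis DP_AE_cong)
  with X A \<open>rv_sub Z A \<in> L0 M H ereal_reals\<close> show ?thesis
    by (simp add: MI_iff L0_reals_rv_add L0_subalg)
qed

lemma Dom_add_cash:
  assumes X: "X \<in> Dom" and A: "A \<in> L0 M H ereal_reals"
  shows "rv_add X A \<in> Dom"
proof -
  obtain Z where "Z \<in> MI X" using X by (auto simp: Dom_rho_I_def)
  with X A show ?thesis
    by (intro DomI[OF _ MI_add_cash]) (auto intro: L0_reals_rv_add Dom_L0 L0_subalg)
qed

lemma rho_add_cash_le:
  assumes X: "X \<in> Dom" and A: "A \<in> L0 M H ereal_reals"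
  shows "AE w in M. rho (rv_add X A) w \<le> rv_sub (rho X) A w"
proof -
  obtain u :: "nat \<Rightarrow> 'a \<Rightarrow> real" where u: "\<And>n. (\<lambda>w. ereal (u n w)) \<in> MI X"
    "AE w in M. rho X w = (INF n. ereal (u n w))"
    using rho_eq_INF[OF X] by blast
  have "AE w in M. \<forall>n. rho (rv_add X A) w \<le> rv_sub (\<lambda>w. ereal (u n w)) A w"
    unfolding AE_all_countable using rho_le[OF MI_add_cash[OF Dom_L0[OF X] A u(1)]] by blast
  moreover have "AE w in M. A w \<in> ereal_reals" using A by (simp add: L0_iff)
  ultimately show ?thesis using u(2)
  proof eventually_elim
    case (elim w)
    then obtain a where a: "A w = ereal a" by (auto simp: ereal_reals_iff)
    have "rho (rv_add X A) w \<le> (INF n. ereal (u n w) + ereal (- a))"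
      using elim(1) a by (intro INF_greatest) (simp add: rv_sub_def eminus_ereal_right)
    also have "\<dots> = (INF n. ereal (u n w)) + ereal (- a)"
      by (rule INF_ereal_add_const) simp
    also have "\<dots> = rv_sub (rho X) A w"
      using elim(3) a by (simp add: rv_sub_def eminus_ereal_right)
    finally show ?case .
  qed
qed

lemma rho_add_cash:
  assumes X: "X \<in> Dom" and A: "A \<in> L0 M H ereal_reals"
  shows "AE w in M. rho (rv_add X A) w = rv_sub (rho X) A w"
proof -
  have A': "(\<lambda>w. - A w) \<in> L0 M H ereal_reals"
    using A unfolding L0_iff by (auto elim!: eventually_mono simp: ereal_reals_iff)
  have Ar: "AE w in M. A w \<in> ereal_reals" using A by (simp add: L0_iff)
  have "AE w in M. rv_add (rv_add X A) (\<lambda>w. - A w) w = X w"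
    using Dom_L0[OF X] Ar unfolding L0_iff
    by (auto elim!: eventually_mono[OF eventually_conj] simp: rv_add_def ereal_reals_iff)
  then have "rho (rv_add (rv_add X A) (\<lambda>w. - A w)) = rho X" by (rule rho_eq_of_AE_eq)
  then have "AE w in M. rho X w \<le> rv_sub (rho (rv_add X A)) (\<lambda>w. - A w) w"
    using rho_add_cash_le[OF Dom_add_cash[OF X A] A'] by simp
  with rho_add_cash_le[OF X A] Ar show ?thesis
  proof eventually_elim
    case (elim w)
    then obtain a where a: "A w = ereal a" by (auto simp: ereal_reals_iff)
    with elim show ?case
      by (cases "rho (rv_add X A) w"; cases "rho X w") (auto simp: rv_sub_def eminus_ereal_right)
  qed
qed

lemma MI_antimono:
  assumes X1: "X1 \<in> Dom" and X2: "X2 \<in> L0 M M ereal_reals" and le: "AE w in M. X2 w \<le> X1 w"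
    and Z: "Z \<in> MI X2"
  shows "Z \<in> MI X1"
proof -
  have Z': "Z \<in> L0 M H ereal_reals" "rv_add X2 Z \<in> DP" using Z X2 by (auto simp: MI_iff)
  have "rv_add X1 Z \<in> D" using Dom_in_D[OF X1] Z'(1) by (auto simp: L0_iff intro: D_add_H)
  moreover have "AE w in M. rv_add X2 Z w \<le> rv_add X1 Z w"
    using le X2 Z'(1) Dom_L0[OF X1] unfolding L0_iff
    by (auto elim!: eventually_mono[OF eventually_conj[OF _ eventually_conj[OF _ eventually_conj]]]
        simp: rv_add_def ereal_reals_iff)
  ultimately have "AE w in M. 0 \<le> I (rv_add X1 Z) w"
    using I_mono Z'(2) unfolding DP_iff by (blast intro: eventually_mono[OF eventually_conj] order_trans)
  with Z' Dom_L0[OF X1] \<open>rv_add X1 Z \<in> D\<close> show ?thesis by (simp add: MI_iff DP_iff)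
qed

lemma rho_antimono:
  assumes "X1 \<in> Dom" "X2 \<in> Dom" "AE w in M. X2 w \<le> X1 w"
  shows "AE w in M. rho X1 w \<le> rho X2 w"
proof (rule rho_greatest[OF borel_measurable_rho])
  fix Z assume "Z \<in> MI X2"
  then show "AE w in M. rho X1 w \<le> Z w"
    using MI_antimono[OF assms(1) Dom_L0[OF assms(2)] assms(3)] rho_le by blast
qed

lemma cond_risk_measure_rho: "cond_risk_measure M H Dom rho"
  unfolding cond_risk_measure_def
proof (intro conjI ballI allI impI)
  show "Dom \<subseteq> L0 M M ereal_reals" using Dom_L0 by blast
  show "ae_closed M Dom" unfolding ae_closed_def ae_eq_def using Dom_AE_cong by blast
  show "ae_eq M (rho (\<lambda>_. 0)) (\<lambda>_. 0)" unfolding ae_eq_def by (rule rho_zero)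
  fix X assume X: "X \<in> Dom"
  show "rho X \<in> L0 M H UNIV" using rho_borel_H[OF X] by (simp add: L0_iff)
  fix A assume A: "A \<in> L0 M H ereal_reals"
  show "rv_add X A \<in> Dom" using Dom_add_cash[OF X A] .
  show "ae_eq M (rho (rv_add X A)) (rv_sub (rho X) A)" unfolding ae_eq_def using rho_add_cash[OF X A] .
qed (use zero_in_Dom rho_antimono in \<open>auto simp: ae_le_def\<close>)

subsection \<open>Convexity\<close>

lemma MI_comb:
  assumes HC: "H_convex M H DP" and X1: "X1 \<in> L0 M M ereal_reals" and X2: "X2 \<in> L0 M M ereal_reals"
    and A: "A \<in> L0 M H ereal_unit" and Z1: "Z1 \<in> MI X1" and Z2: "Z2 \<in> MI X2"
  shows "rv_comb A Z1 Z2 \<in> MI (rv_comb A X1 X2)"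
proof -
  have Z1': "Z1 \<in> L0 M H ereal_reals" "rv_add X1 Z1 \<in> DP" using Z1 X1 by (auto simp: MI_iff)
  have Z2': "Z2 \<in> L0 M H ereal_reals" "rv_add X2 Z2 \<in> DP" using Z2 X2 by (auto simp: MI_iff)
  have "rv_comb A (rv_add X1 Z1) (rv_add X2 Z2) \<in> DP" using HC A Z1'(2) Z2'(2) by (simp add: H_convex_def)
  moreover have "rv_add (rv_comb A X1 X2) (rv_comb A Z1 Z2) \<in> borel_measurable M"
  proof -
    have [measurable]: "X1 \<in> borel_measurable M" "X2 \<in> borel_measurable M" "A \<in> borel_measurable M"
      "Z1 \<in> borel_measurable M" "Z2 \<in> borel_measurable M"
      using X1 X2 A Z1'(1) Z2'(1) by (auto simp: L0_iff borel_measurable_subalg)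
    show ?thesis by measurable
  qed
  moreover have "AE w in M. rv_add (rv_comb A X1 X2) (rv_comb A Z1 Z2) w = rv_comb A (rv_add X1 Z1) (rv_add X2 Z2) w"
  proof -
    have "AE w in M. X1 w \<in> ereal_reals" "AE w in M. X2 w \<in> ereal_reals" "AE w in M. A w \<in> ereal_unit"
      "AE w in M. Z1 w \<in> ereal_reals" "AE w in M. Z2 w \<in> ereal_reals"
      using X1 X2 A Z1'(1) Z2'(1) by (simp_all add: L0_iff)
    then show ?thesis
    proof eventually_elim
      case (elim w)
      then obtain x1 x2 a z1 z2 where "X1 w = ereal x1" "X2 w = ereal x2" "A w = ereal a"
        "Z1 w = ereal z1" "Z2 w = ereal z2"
        by (auto simp: ereal_reals_iff ereal_unit_iff)
      then show ?case by (simp add: rv_comb_def rv_add_def rv_mul_def one_ereal_def algebra_simps)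
    qed
  qed
  ultimately have "rv_add (rv_comb A X1 X2) (rv_comb A Z1 Z2) \<in> DP" by (rule DP_AE_cong)
  moreover have "rv_comb A Z1 Z2 \<in> L0 M H ereal_reals" using A Z1'(1) Z2'(1) by (rule L0_reals_rv_comb)
  ultimately show ?thesis using X1 X2 A by (simp add: MI_iff L0_reals_rv_comb L0_subalg)
qed

lemma Dom_comb:
  assumes HC: "H_convex M H DP" and X1: "X1 \<in> Dom" and X2: "X2 \<in> Dom" and A: "A \<in> L0 M H ereal_unit"
  shows "rv_comb A X1 X2 \<in> Dom"
proof -
  obtain Z1 Z2 where "Z1 \<in> MI X1" "Z2 \<in> MI X2" using X1 X2 by (auto simp: Dom_rho_I_def)
  with assms show ?thesis
    by (intro DomI[OF _ MI_comb]) (auto intro: L0_reals_rv_comb Dom_L0 L0_subalg)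
qed

lemma rho_convex:
  assumes HC: "H_convex M H DP" and X1: "X1 \<in> Dom" and X2: "X2 \<in> Dom" and A: "A \<in> L0 M H ereal_unit"
  shows "AE w in M. rho (rv_comb A X1 X2) w \<le> rv_comb A (rho X1) (rho X2) w"
proof -
  obtain u :: "nat \<Rightarrow> 'a \<Rightarrow> real" where u: "\<And>n. (\<lambda>w. ereal (u n w)) \<in> MI X1"
    "AE w in M. rho X1 w = (INF n. ereal (u n w))"
    using rho_eq_INF[OF X1] by blast
  obtain v :: "nat \<Rightarrow> 'a \<Rightarrow> real" where v: "\<And>n. (\<lambda>w. ereal (v n w)) \<in> MI X2"
    "AE w in M. rho X2 w = (INF n. ereal (v n w))"
    using rho_eq_INF[OF X2] by blast
  have "AE w in M. \<forall>n m. rho (rv_comb A X1 X2) w \<le> rv_comb A (\<lambda>w. ereal (u n w)) (\<lambda>w. ereal (v m w)) w"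
    unfolding AE_all_countable using rho_le[OF MI_comb[OF HC Dom_L0[OF X1] Dom_L0[OF X2] A u(1) v(1)]] by blast
  moreover have "AE w in M. A w \<in> ereal_unit" using A by (simp add: L0_iff)
  ultimately show ?thesis using u(2) v(2)
  proof eventually_elim
    case (elim w)
    then obtain a where a: "A w = ereal a" "0 \<le> a" "a \<le> 1" by (auto simp: ereal_unit_iff)
    have "rho (rv_comb A X1 X2) w \<le> ereal a * rho X1 w + ereal (1 - a) * rho X2 w"
      using elim(1) a unfolding elim(3,4)
      by (intro ereal_le_INF_convex_comb) (auto simp: rv_comb_def rv_add_def rv_mul_def one_ereal_def)
    also have "\<dots> = rv_comb A (rho X1) (rho X2) w"
      using a by (simp add: elim(3,4) rv_comb_def rv_add_def rv_mul_def one_ereal_def eplus_eq_plus INF_ereal_ne_PInf)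
    finally show ?case .
  qed
qed

lemma cond_convex_rho: "H_convex M H DP \<Longrightarrow> cond_convex_rm M H Dom rho"
  unfolding cond_convex_rm_def H_convex_def[of M H Dom] ae_le_def
  using Dom_comb rho_convex by blast

subsection \<open>Positive homogeneity\<close>

lemma D_mult:
  "pos_homogeneous_indicator M H D I \<Longrightarrow> A \<in> L0 M H ereal_nonneg_reals \<Longrightarrow> X \<in> D \<Longrightarrow> rv_mul A X \<in> D"
  unfolding pos_homogeneous_indicator_def by blast

lemma I_mult:
  "pos_homogeneous_indicator M H D I \<Longrightarrow> A \<in> L0 M H ereal_nonneg_reals \<Longrightarrow> X \<in> D \<Longrightarrow>
    AE w in M. I (rv_mul A X) w = A w * I X w"
  unfolding pos_homogeneous_indicator_def ae_eq_def by (auto simp: rv_mul_def)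

lemma I_local:
  assumes PH: "pos_homogeneous_indicator M H D I" and B: "B \<in> sets H"
    and X: "X \<in> D" and Y: "Y \<in> D" and XY: "AE w in M. w \<in> B \<longrightarrow> X w = Y w"
  shows "AE w in M. w \<in> B \<longrightarrow> I X w = I Y w"
proof -
  let ?ind = "indicator B :: 'a \<Rightarrow> ereal"
  have ind: "?ind \<in> L0 M H ereal_nonneg_reals"
    using B by (auto simp: L0_iff ereal_nonneg_reals_iff indicator_def)
  have "AE w in M. rv_mul ?ind X w = rv_mul ?ind Y w"
    using XY by eventually_elim (simp add: rv_mul_def indicator_def)
  then have "AE w in M. I (rv_mul ?ind X) w = I (rv_mul ?ind Y) w"
    using I_AE_cong D_mult[OF PH ind] X Y by blast
  with I_mult[OF PH ind X] I_mult[OF PH ind Y] show ?thesis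
  proof eventually_elim
    case (elim w)
    show ?case
    proof
      assume "w \<in> B"
      with elim show "I X w = I Y w" by simp
    qed
  qed
qed

lemma DP_mult:
  assumes PH: "pos_homogeneous_indicator M H D I" and A: "A \<in> L0 M H ereal_nonneg_reals"
    and Y: "Y \<in> DP"
  shows "rv_mul A Y \<in> DP"
proof -
  have Y': "Y \<in> D" "AE w in M. 0 \<le> I Y w" using Y by (auto simp: DP_iff)
  have "AE w in M. A w \<in> ereal_nonneg_reals" using A by (simp add: L0_iff)
  with Y'(2) I_mult[OF PH A Y'(1)] have "AE w in M. 0 \<le> I (rv_mul A Y) w"
    by eventually_elim (auto simp: ereal_nonneg_reals_iff ereal_zero_le_0_iff)
  with D_mult[OF PH A Y'(1)] show ?thesis unfolding DP_iff by blast
qed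

lemma MI_mult:
  assumes PH: "pos_homogeneous_indicator M H D I" and A: "A \<in> L0 M H ereal_nonneg_reals"
    and X: "X \<in> L0 M M ereal_reals" and Z: "Z \<in> MI X"
  shows "rv_mul A Z \<in> MI (rv_mul A X)"
proof -
  have Z': "Z \<in> L0 M H ereal_reals" "rv_add X Z \<in> DP" using Z X by (auto simp: MI_iff)
  have A': "A \<in> L0 M H ereal_reals" using A L0_mono[OF ereal_nonneg_reals_subset_reals] by blast
  have "rv_add (rv_mul A X) (rv_mul A Z) \<in> borel_measurable M"
  proof -
    have [measurable]: "X \<in> borel_measurable M" "A \<in> borel_measurable M" "Z \<in> borel_measurable M"
      using X A Z'(1) by (auto simp: L0_iff borel_measurable_subalg)
    show ?thesis by measurable
  qed
  moreover have "AE w in M. rv_add (rv_mul A X) (rv_mul A Z) w = rv_mul A (rv_add X Z) w"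
  proof -
    have "AE w in M. X w \<in> ereal_reals" "AE w in M. A w \<in> ereal_nonneg_reals" "AE w in M. Z w \<in> ereal_reals"
      using X A Z'(1) by (simp_all add: L0_iff)
    then show ?thesis
    proof eventually_elim
      case (elim w)
      then obtain x a z where "X w = ereal x" "A w = ereal a" "Z w = ereal z"
        by (auto simp: ereal_reals_iff ereal_nonneg_reals_iff)
      then show ?case by (simp add: rv_add_def rv_mul_def distrib_left)
    qed
  qed
  ultimately have "rv_add (rv_mul A X) (rv_mul A Z) \<in> DP"
    using DP_mult[OF PH A Z'(2)] by (rule DP_AE_cong[rotated])
  moreover have "rv_mul A Z \<in> L0 M H ereal_reals" using A' Z'(1) by (rule L0_reals_rv_mul)
  ultimately show ?thesis using X A' by (simp add: MI_iff L0_reals_rv_mul L0_subalg)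
qed

lemma Dom_mult:
  assumes PH: "pos_homogeneous_indicator M H D I" and A: "A \<in> L0 M H ereal_nonneg_reals"
    and X: "X \<in> Dom"
  shows "rv_mul A X \<in> Dom"
proof -
  obtain Z where "Z \<in> MI X" using X by (auto simp: Dom_rho_I_def)
  moreover have "A \<in> L0 M M ereal_reals" using L0_nonneg_imp_reals_subalg[OF A] .
  ultimately show ?thesis using assms
    by (intro DomI[OF _ MI_mult]) (auto intro: L0_reals_rv_mul Dom_L0)
qed

lemma rho_mult_le:
  assumes PH: "pos_homogeneous_indicator M H D I" and A: "A \<in> L0 M H ereal_nonneg_reals"
    and X: "X \<in> Dom"
  shows "AE w in M. rho (rv_mul A X) w \<le> rv_mul A (rho X) w"
proof -
  obtain u :: "nat \<Rightarrow> 'a \<Rightarrow> real" where u: "\<And>n. (\<lambda>w. ereal (u n w)) \<in> MI X"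
    "AE w in M. rho X w = (INF n. ereal (u n w))"
    using rho_eq_INF[OF X] by blast
  have "AE w in M. \<forall>n. rho (rv_mul A X) w \<le> rv_mul A (\<lambda>w. ereal (u n w)) w"
    unfolding AE_all_countable using rho_le[OF MI_mult[OF PH A Dom_L0[OF X] u(1)]] by blast
  moreover have "AE w in M. A w \<in> ereal_nonneg_reals" using A by (simp add: L0_iff)
  ultimately show ?thesis using u(2)
  proof eventually_elim
    case (elim w)
    then obtain a where a: "A w = ereal a" "0 \<le> a" by (auto simp: ereal_nonneg_reals_iff)
    have "rho (rv_mul A X) w \<le> (INF n. ereal (a * u n w))"
      using elim(1) a by (intro INF_greatest) (simp add: rv_mul_def)
    also have "\<dots> = rv_mul A (rho X) w"
      using a by (simp add: elim(3) rv_mul_def INF_ereal_mult_const)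
    finally show ?case .
  qed
qed

lemma MI_mult_nonneg_where_zero:
  assumes PH: "pos_homogeneous_indicator M H D I" and A: "A \<in> L0 M H ereal_nonneg_reals"
    and X: "X \<in> L0 M M ereal_reals" and Z: "Z \<in> MI (rv_mul A X)"
  shows "AE w in M. A w = 0 \<longrightarrow> 0 \<le> Z w"
proof -
  have A': "A \<in> L0 M M ereal_reals" using L0_nonneg_imp_reals_subalg[OF A] .
  have Z': "Z \<in> L0 M H ereal_reals" "rv_add (rv_mul A X) Z \<in> DP"
    using Z L0_reals_rv_mul[OF A' X] by (auto simp: MI_iff)
  have [measurable]: "A \<in> borel_measurable H" "Z \<in> borel_measurable H" using A Z'(1) by (auto simp: L0_iff)
  let ?B = "{w \<in> space H. A w = 0}"
  have "AE w in M. w \<in> ?B \<longrightarrow> I (rv_add (rv_mul A X) Z) w = I Z w"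
    using Z'(2) D_of_H_measurable[of Z]
    by (intro I_local[OF PH]) (auto simp: DP_iff rv_add_def rv_mul_def)
  moreover have "AE w in M. 0 \<le> I (rv_add (rv_mul A X) Z) w" using Z'(2) by (simp add: DP_iff)
  moreover have "AE w in M. I Z w \<le> Z w" using I_le_of_H_measurable by simp
  ultimately show ?thesis using AE_space by eventually_elim (auto simp: space_subalg)
qed

lemma MI_divide:
  assumes PH: "pos_homogeneous_indicator M H D I" and A: "A \<in> L0 M H ereal_nonneg_reals"
    and X: "X \<in> Dom" and Z: "Z \<in> MI (rv_mul A X)" and Z0: "Z0 \<in> MI X"
  shows "(\<lambda>w. if A w = 0 then Z0 w else Z w / A w) \<in> MI X"
proof -
  \<comment> \<open>on \<open>{A = 0}\<close> the quotient carries no information, so an arbitrary element of \<open>M_I(X)\<close> is glued in\<close>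
  define W where "W w = (if A w = 0 then Z0 w else Z w / A w)" for w
  define C where "C w = (if A w = 0 then 0 else inverse (A w))" for w
  have A': "A \<in> L0 M M ereal_reals" using L0_nonneg_imp_reals_subalg[OF A] .
  have Z': "Z \<in> L0 M H ereal_reals" "rv_add (rv_mul A X) Z \<in> DP"
    using Z L0_reals_rv_mul[OF A' Dom_L0[OF X]] by (auto simp: MI_iff)
  have Z0': "Z0 \<in> L0 M H ereal_reals" "rv_add X Z0 \<in> DP" using Z0 Dom_L0[OF X] by (auto simp: MI_iff)
  have W: "W \<in> L0 M H ereal_reals"
    unfolding W_def using A Z'(1) Z0'(1) by (rule L0_reals_divide_or_else)
  have CY: "rv_mul C (rv_add (rv_mul A X) Z) \<in> DP"
    unfolding C_def using DP_mult[OF PH L0_nonneg_inverse_or_zero[OF A] Z'(2)] .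
  have V: "rv_add X W \<in> D" using Dom_in_D[OF X] W by (auto simp: L0_iff intro: D_add_H)
  have [measurable]: "A \<in> borel_measurable H" using A by (simp add: L0_iff)
  have "AE w in M. w \<in> {w \<in> space H. A w = 0} \<longrightarrow> I (rv_add X W) w = I (rv_add X Z0) w"
    using V Z0'(2) by (intro I_local[OF PH]) (auto simp: DP_iff W_def rv_add_def)
  moreover have "AE w in M. w \<in> {w \<in> space H. A w \<noteq> 0} \<longrightarrow>
      I (rv_add X W) w = I (rv_mul C (rv_add (rv_mul A X) Z)) w"
  proof (rule I_local[OF PH _ V])
    show "{w \<in> space H. A w \<noteq> 0} \<in> sets H" by measurable
    show "rv_mul C (rv_add (rv_mul A X) Z) \<in> D" using CY by (simp add: DP_iff)
    have "AE w in M. A w \<in> ereal_nonneg_reals" "AE w in M. Z w \<in> ereal_reals" "AE w in M. X w \<in> ereal_reals"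
      using A Z'(1) Dom_L0[OF X] by (simp_all add: L0_iff)
    then show "AE w in M. w \<in> {w \<in> space H. A w \<noteq> 0} \<longrightarrow> rv_add X W w = rv_mul C (rv_add (rv_mul A X) Z) w"
    proof eventually_elim
      case (elim w)
      then obtain a z x where "A w = ereal a" "0 \<le> a" "Z w = ereal z" "X w = ereal x"
        by (auto simp: ereal_reals_iff ereal_nonneg_reals_iff)
      then show ?case by (auto simp: W_def C_def rv_add_def rv_mul_def field_simps)
    qed
  qed
  moreover have "AE w in M. 0 \<le> I (rv_add X Z0) w" "AE w in M. 0 \<le> I (rv_mul C (rv_add (rv_mul A X) Z)) w"
    using Z0'(2) CY by (simp_all add: DP_iff)
  ultimately have "AE w in M. 0 \<le> I (rv_add X W) w"
    using AE_space by eventually_elim (auto simp: space_subalg)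
  with V W Dom_L0[OF X] show ?thesis by (simp add: MI_iff DP_iff W_def[abs_def])
qed

lemma rho_mult_ge:
  assumes PH: "pos_homogeneous_indicator M H D I" and A: "A \<in> L0 M H ereal_nonneg_reals"
    and X: "X \<in> Dom"
  shows "AE w in M. rv_mul A (rho X) w \<le> rho (rv_mul A X) w"
proof (rule rho_greatest)
  have "A \<in> borel_measurable M" using A by (simp add: L0_iff borel_measurable_subalg)
  then show "rv_mul A (rho X) \<in> borel_measurable M" by measurable
next
  fix Z assume Z: "Z \<in> MI (rv_mul A X)"
  obtain Z0 where Z0: "Z0 \<in> MI X" using X by (auto simp: Dom_rho_I_def)
  have "AE w in M. rho X w \<le> (if A w = 0 then Z0 w else Z w / A w)"
    using rho_le[OF MI_divide[OF PH A X Z Z0]] .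
  moreover have "AE w in M. A w = 0 \<longrightarrow> 0 \<le> Z w"
    using MI_mult_nonneg_where_zero[OF PH A Dom_L0[OF X] Z] .
  moreover have "AE w in M. A w \<in> ereal_nonneg_reals" "AE w in M. Z w \<in> ereal_reals"
    using A MI_L0[OF Z] by (simp_all add: L0_iff)
  ultimately show "AE w in M. rv_mul A (rho X) w \<le> Z w"
  proof eventually_elim
    case (elim w)
    then obtain a z where a: "A w = ereal a" "0 \<le> a" and z: "Z w = ereal z"
      by (auto simp: ereal_nonneg_reals_iff ereal_reals_iff)
    show ?case
    proof (cases "a = 0")
      case True
      then show ?thesis using elim(2) a by (simp add: rv_mul_def zero_ereal_def[symmetric])
    next
      case False
      then show ?thesis using elim(1) a z by (simp add: rv_mul_def ereal_mult_le_of_le_divide)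
    qed
  qed
qed

lemma cond_pos_homogeneous_rho:
  assumes PH: "pos_homogeneous_indicator M H D I"
  shows "cond_pos_homogeneous_rm M H Dom rho"
  unfolding cond_pos_homogeneous_rm_def ae_eq_def
proof (intro ballI conjI)
  fix A X assume A: "A \<in> L0 M H ereal_nonneg_reals" and X: "X \<in> Dom"
  show "rv_mul A X \<in> Dom" using Dom_mult[OF PH A X] .
  show "AE w in M. rho (rv_mul A X) w = rv_mul A (rho X) w"
    using rho_mult_le[OF PH A X] rho_mult_ge[OF PH A X] by eventually_elim simp
qed

subsection \<open>Subadditivity\<close>

lemma DP_add:
  assumes SA: "superadditive_indicator M D I" and Y1: "Y1 \<in> DP" and Y2: "Y2 \<in> DP"
  shows "rv_add Y1 Y2 \<in> DP"
proof -
  have "Y1 \<in> D" "Y2 \<in> D" and I_nonneg: "AE w in M. 0 \<le> I Y1 w" "AE w in M. 0 \<le> I Y2 w"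
    using Y1 Y2 by (auto simp: DP_iff)
  then have "rv_add Y1 Y2 \<in> D" and I_sum: "AE w in M. rv_add (I Y1) (I Y2) w \<le> I (rv_add Y1 Y2) w"
    using SA unfolding superadditive_indicator_def ae_le_def by blast+
  moreover have "AE w in M. 0 \<le> I (rv_add Y1 Y2) w"
    using I_nonneg I_sum
  proof eventually_elim
    case (elim w)
    then have "0 \<le> eplus (I Y1 w) (I Y2 w)" by (intro eplus_nonneg)
    with elim(3) show ?case by (simp add: rv_add_def)
  qed
  ultimately show ?thesis unfolding DP_iff by blast
qed

lemma MI_add:
  assumes SA: "superadditive_indicator M D I" and X1: "X1 \<in> L0 M M ereal_reals"
    and X2: "X2 \<in> L0 M M ereal_reals" and Z1: "Z1 \<in> MI X1" and Z2: "Z2 \<in> MI X2"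
  shows "rv_add Z1 Z2 \<in> MI (rv_add X1 X2)"
proof -
  have Z1': "Z1 \<in> L0 M H ereal_reals" "rv_add X1 Z1 \<in> DP" using Z1 X1 by (auto simp: MI_iff)
  have Z2': "Z2 \<in> L0 M H ereal_reals" "rv_add X2 Z2 \<in> DP" using Z2 X2 by (auto simp: MI_iff)
  have "rv_add (rv_add X1 X2) (rv_add Z1 Z2) \<in> borel_measurable M"
  proof -
    have [measurable]: "X1 \<in> borel_measurable M" "X2 \<in> borel_measurable M"
      "Z1 \<in> borel_measurable M" "Z2 \<in> borel_measurable M"
      using X1 X2 Z1'(1) Z2'(1) by (auto simp: L0_iff borel_measurable_subalg)
    show ?thesis by measurable
  qed
  moreover have "AE w in M. rv_add (rv_add X1 X2) (rv_add Z1 Z2) w = rv_add (rv_add X1 Z1) (rv_add X2 Z2) w"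
  proof -
    have "AE w in M. X1 w \<in> ereal_reals" "AE w in M. X2 w \<in> ereal_reals"
      "AE w in M. Z1 w \<in> ereal_reals" "AE w in M. Z2 w \<in> ereal_reals"
      using X1 X2 Z1'(1) Z2'(1) by (simp_all add: L0_iff)
    then show ?thesis
    proof eventually_elim
      case (elim w)
      then obtain x1 x2 z1 z2 where "X1 w = ereal x1" "X2 w = ereal x2" "Z1 w = ereal z1" "Z2 w = ereal z2"
        by (auto simp: ereal_reals_iff)
      then show ?case by (simp add: rv_add_def)
    qed
  qed
  ultimately have "rv_add (rv_add X1 X2) (rv_add Z1 Z2) \<in> DP"
    using DP_add[OF SA Z1'(2) Z2'(2)] by (rule DP_AE_cong[rotated])
  moreover have "rv_add Z1 Z2 \<in> L0 M H ereal_reals" using Z1'(1) Z2'(1) by (rule L0_reals_rv_add)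
  ultimately show ?thesis using X1 X2 by (simp add: MI_iff L0_reals_rv_add)
qed

lemma Dom_add:
  assumes SA: "superadditive_indicator M D I" and X1: "X1 \<in> Dom" and X2: "X2 \<in> Dom"
  shows "rv_add X1 X2 \<in> Dom"
proof -
  obtain Z1 Z2 where "Z1 \<in> MI X1" "Z2 \<in> MI X2" using X1 X2 by (auto simp: Dom_rho_I_def)
  with assms show ?thesis
    by (intro DomI[OF _ MI_add]) (auto intro: L0_reals_rv_add Dom_L0)
qed

lemma rho_subadditive:
  assumes SA: "superadditive_indicator M D I" and X1: "X1 \<in> Dom" and X2: "X2 \<in> Dom"
  shows "AE w in M. rho (rv_add X1 X2) w \<le> rv_add (rho X1) (rho X2) w"
proof -
  obtain u :: "nat \<Rightarrow> 'a \<Rightarrow> real" where u: "\<And>n. (\<lambda>w. ereal (u n w)) \<in> MI X1"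
    "AE w in M. rho X1 w = (INF n. ereal (u n w))"
    using rho_eq_INF[OF X1] by blast
  obtain v :: "nat \<Rightarrow> 'a \<Rightarrow> real" where v: "\<And>n. (\<lambda>w. ereal (v n w)) \<in> MI X2"
    "AE w in M. rho X2 w = (INF n. ereal (v n w))"
    using rho_eq_INF[OF X2] by blast
  have "AE w in M. \<forall>n m. rho (rv_add X1 X2) w \<le> rv_add (\<lambda>w. ereal (u n w)) (\<lambda>w. ereal (v m w)) w"
    unfolding AE_all_countable using rho_le[OF MI_add[OF SA Dom_L0[OF X1] Dom_L0[OF X2] u(1) v(1)]] by blast
  with u(2) v(2) show ?thesis
  proof eventually_elim
    case (elim w)
    then show ?case
      by (simp add: rv_add_def eplus_eq_plus INF_ereal_ne_PInf ereal_le_INF_add_INF)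
  qed
qed

lemma subadditive_rho: "superadditive_indicator M D I \<Longrightarrow> subadditive_rm M Dom rho"
  unfolding subadditive_rm_def ae_le_def using Dom_add rho_subadditive by blast

end

theorem mainTheorem10:
  fixes M H :: "'a measure" and D :: "('a \<Rightarrow> ereal) set" and I :: "('a \<Rightarrow> ereal) \<Rightarrow> 'a \<Rightarrow> ereal"
  assumes "prob_space M"
    and "complete_measure M"
    and "subalgebra M H"
    and "null_sets M \<subseteq> sets H"
    and "cond_indicator M H D I"
    and "increasing_indicator M D I"
  shows "cond_risk_measure M H (Dom_rho_I M H D I) (rho_I M H D I)
    \<and> (H_convex M H (D_plus M D I) \<longrightarrow> cond_convex_rm M H (Dom_rho_I M H D I) (rho_I M H D I))
    \<and> (pos_homogeneous_indicator M H D I \<longrightarrow> cond_pos_homogeneous_rm M H (Dom_rho_I M H D I) (rho_I M H D I))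
    \<and> (superadditive_indicator M D I \<longrightarrow> subadditive_rm M (Dom_rho_I M H D I) (rho_I M H D I))"
proof -
  interpret increasing_cond_indicator M H D I
    using assms by (simp add: increasing_cond_indicator_def increasing_cond_indicator_axioms_def)
  show ?thesis
    using cond_risk_measure_rho cond_convex_rho cond_pos_homogeneous_rho subadditive_rho by blast
qed

end
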